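(* Let $S$ be a topological space and let $I\subseteq \mathscr{C}(S)[x_1,\dots,x_n]$ be an ideal. Then for every open set $U\subseteq S$ we have $IV(I)(U)=FRad(I)(U)$, i.e. $IV(I)=FRad(I)$ as presheaves on $S$.
   Context: For a subset $U\subseteq S$, $\mathscr{C}(U)$ is the ring of continuous complex-valued functions on $U$, and $\mathscr{C}[x_1,\dots,x_n](U):=\mathscr{C}(U)[x_1,\dots,x_n]$. For $f=\sum_\alpha a_\alpha x^\alpha\in \mathscr{C}[x_1,\dots,x_n](U)$ and $s\in U$, write $f_s=\sum_\alpha a_\alpha(s)x^\alpha\in\mathbb{C}[x_1,\dots,x_n]$. For the ideal $I$ of global sections, $I(U)$ denotes the ideal of $\mathscr{C}[x_1,\dots,x_n](U)$ generated by the restrictions $f|_U$, $f\in I$, and $I(U)|_s=\{g_s : g\in I(U)\}$. Define $V(I)(U)=\{(s,x)\in U\times\mathbb{C}^n : g_s(x)=0 \text{ for all } g\in I(U)\}$, $IV(I)(U)=\{f\in \mathscr{C}[x_1,\dots,x_n](U) : f_s(x)=0 \text{ for all }(s,x)\in V(I)(U)\}$, and the fibrewise radical $FRad(I)(U)=\{f\in \mathscr{C}[x_1,\dots,x_n](U): f_s\in\sqrt{I(U)|_s}\text{ for all } s\in U\}$, where $\sqrt{\cdot}$ is the usual radical in $\mathbb{C}[x_1,\dots,x_n]$. *)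

theory Defs
  imports "HOL-Analysis.Analysis" "HOL-Library.Poly_Mapping" "HOL-Library.Function_Algebras"
begin

text \<open>Polynomials over \<open>C(U)\<close> have coefficients
  \<open>'a \<Rightarrow> complex\<close> (pointwise ring structure), continuous on U and normalised to vanish
  outside U, so that they represent functions on U faithfully.\<close>

type_synonym 'c mpoly = "(nat \<Rightarrow>\<^sub>0 nat) \<Rightarrow>\<^sub>0 'c"

definition in_vars :: "nat \<Rightarrow> ('c::zero) mpoly \<Rightarrow> bool" where
  "in_vars n p \<longleftrightarrow> (\<forall>m \<in> Poly_Mapping.keys p. Poly_Mapping.keys m \<subseteq> {..<(n::nat)})"

definition CX :: "nat \<Rightarrow> 'a::topological_space set \<Rightarrow> ('a \<Rightarrow> complex) mpoly set" where
  "CX n U = {p. in_vars n p \<and>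
      (\<forall>\<alpha>. continuous_on U (Poly_Mapping.lookup p \<alpha>) \<and> (\<forall>s. s \<notin> U \<longrightarrow> Poly_Mapping.lookup p \<alpha> s = 0))}"

definition is_ideal :: "nat \<Rightarrow> ('a::topological_space \<Rightarrow> complex) mpoly set \<Rightarrow> bool" where
  "is_ideal n I \<longleftrightarrow> I \<subseteq> CX n UNIV \<and> 0 \<in> I \<and> (\<forall>f\<in>I. \<forall>g\<in>I. f + g \<in> I)
      \<and> (\<forall>h\<in>CX n UNIV. \<forall>f\<in>I. h * f \<in> I)"

definition restr :: "'a set \<Rightarrow> ('a \<Rightarrow> complex) mpoly \<Rightarrow> ('a \<Rightarrow> complex) mpoly" where
  "restr U f = Poly_Mapping.map (\<lambda>c s. if s \<in> U then c s else 0) f"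

definition fib :: "'a \<Rightarrow> ('a \<Rightarrow> complex) mpoly \<Rightarrow> complex mpoly" where
  "fib s f = Poly_Mapping.map (\<lambda>c. c s) f"

definition peval :: "complex mpoly \<Rightarrow> (nat \<Rightarrow> complex) \<Rightarrow> complex" where
  "peval p x = (\<Sum>\<alpha>\<in>Poly_Mapping.keys p. Poly_Mapping.lookup p \<alpha> * (\<Prod>i\<in>Poly_Mapping.keys \<alpha>. x i ^ Poly_Mapping.lookup \<alpha> i))"

text \<open>points of \<open>\<complex>^n\<close>, as sequences vanishing from index n on\<close>
definition pts :: "nat \<Rightarrow> (nat \<Rightarrow> complex) set" where
  "pts n = {x. \<forall>i\<ge>n. x i = 0}"

definition ideal_on :: "nat \<Rightarrow> ('a::topological_space \<Rightarrow> complex) mpoly set \<Rightarrow> 'a set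
    \<Rightarrow> ('a \<Rightarrow> complex) mpoly set" where
  "ideal_on n I U = {g. \<exists>(k::nat) h f. (\<forall>i<k. h i \<in> CX n U \<and> f i \<in> I) \<and>
      g = (\<Sum>i<k. h i * restr U (f i))}"

definition V_on :: "nat \<Rightarrow> ('a::topological_space \<Rightarrow> complex) mpoly set \<Rightarrow> 'a set
    \<Rightarrow> ('a \<times> (nat \<Rightarrow> complex)) set" where
  "V_on n I U = {(s, x). s \<in> U \<and> x \<in> pts n \<and> (\<forall>g\<in>ideal_on n I U. peval (fib s g) x = 0)}"

definition IV_on :: "nat \<Rightarrow> ('a::topological_space \<Rightarrow> complex) mpoly set \<Rightarrow> 'a set
    \<Rightarrow> ('a \<Rightarrow> complex) mpoly set" where
  "IV_on n I U = {f \<in> CX n U. \<forall>(s, x)\<in>V_on n I U. peval (fib s f) x = 0}"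

definition crad :: "complex mpoly set \<Rightarrow> complex mpoly set" where
  "crad J = {q. \<exists>m\<ge>1. q ^ m \<in> J}"

definition FRad_on :: "nat \<Rightarrow> ('a::topological_space \<Rightarrow> complex) mpoly set \<Rightarrow> 'a set
    \<Rightarrow> ('a \<Rightarrow> complex) mpoly set" where
  "FRad_on n I U = {f \<in> CX n U. \<forall>s\<in>U. fib s f \<in> crad (fib s ` ideal_on n I U)}"

end

theory Submission
  imports Defs "HOL-Computational_Algebra.Fundamental_Theorem_Algebra"
begin

text \<open>Fix \<open>s \<in> U\<close>. The fibre \<open>I(U)|\<^sub>s\<close> is an ideal of \<open>\<complex>[x\<^sub>1,\<dots>,x\<^sub>n]\<close> and the fibre of
  \<open>V(I)(U)\<close> over \<open>s\<close> is its zero set, so \<open>IV(I)(U) = FRad(I)(U)\<close> is Hilbert's Nullstellensatz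
  applied in every fibre. The Nullstellensatz itself is proved directly: an ideal \<open>M\<close> maximal among
  those avoiding the powers of \<open>f\<close> is prime, and since \<open>\<complex>\<close> is uncountable while
  \<open>\<complex>[x\<^sub>1,\<dots>,x\<^sub>n]\<close> has countable dimension, \<open>M\<close> contains some \<open>x\<^sub>j - z\<^sub>j\<close> for every \<open>j\<close>.
  Hence the ideal vanishes at \<open>z\<close> while \<open>f\<close> does not.\<close>

lemma poly_mapping_sum_single:
  assumes "finite A" "Poly_Mapping.keys p \<subseteq> A"
  shows "p = (\<Sum>a\<in>A. Poly_Mapping.single a (Poly_Mapping.lookup p a))"
proof (rule poly_mapping_eqI)
  fix k
  have "(\<Sum>a\<in>A. Poly_Mapping.lookup (Poly_Mapping.single a (Poly_Mapping.lookup p a)) k)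
      = (\<Sum>a\<in>A. if a = k then Poly_Mapping.lookup p a else 0)"
    by (intro sum.cong) (auto simp: lookup_single when_def)
  also have "\<dots> = Poly_Mapping.lookup p k"
    using assms by (auto simp: sum.delta' in_keys_iff)
  finally show "Poly_Mapping.lookup p k =
      Poly_Mapping.lookup (\<Sum>a\<in>A. Poly_Mapping.single a (Poly_Mapping.lookup p a)) k"
    by (simp add: lookup_sum)
qed

lemma lookup_mult_finite:
  fixes p q :: "'a::comm_monoid_add \<Rightarrow>\<^sub>0 'b::comm_semiring_1"
  assumes "finite A" "Poly_Mapping.keys p \<subseteq> A" "finite B" "Poly_Mapping.keys q \<subseteq> B"
  shows "Poly_Mapping.lookup (p * q) k =
    (\<Sum>a\<in>A. \<Sum>b\<in>B. if k = a + b then Poly_Mapping.lookup p a * Poly_Mapping.lookup q b else 0)"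
proof -
  have "p * q = (\<Sum>a\<in>A. Poly_Mapping.single a (Poly_Mapping.lookup p a)) *
      (\<Sum>b\<in>B. Poly_Mapping.single b (Poly_Mapping.lookup q b))"
    using poly_mapping_sum_single[OF assms(1,2)] poly_mapping_sum_single[OF assms(3,4)] by simp
  also have "\<dots> = (\<Sum>a\<in>A. \<Sum>b\<in>B.
      Poly_Mapping.single (a + b) (Poly_Mapping.lookup p a * Poly_Mapping.lookup q b))"
    by (simp add: sum_product mult_single)
  finally show ?thesis
    by (simp add: lookup_sum lookup_single when_def eq_commute)
qed

lemma sum_fun_apply: "(\<Sum>i\<in>A. f i) x = (\<Sum>i\<in>A. f i x)"
  by (induction A rule: infinite_finite_induct) auto

lemma in_vars_zero [simp]: "in_vars n 0"
  by (simp add: in_vars_def)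

lemma in_vars_one [simp]: "in_vars n (1 :: 'b::zero_neq_one mpoly)"
  by (simp add: in_vars_def)

lemma in_vars_add: "in_vars n p \<Longrightarrow> in_vars n q \<Longrightarrow> in_vars n (p + q :: 'b::monoid_add mpoly)"
  using keys_add[of p q] by (auto simp: in_vars_def)

lemma in_vars_uminus: "in_vars n p \<Longrightarrow> in_vars n (- p :: 'b::ab_group_add mpoly)"
  by (simp add: in_vars_def)

lemma in_vars_diff: "in_vars n p \<Longrightarrow> in_vars n q \<Longrightarrow> in_vars n (p - q :: 'b::ab_group_add mpoly)"
  using keys_diff[of p q] by (auto simp: in_vars_def)

lemma in_vars_mult:
  assumes "in_vars n p" "in_vars n q"
  shows "in_vars n (p * q :: 'b::comm_semiring_1 mpoly)"
  unfolding in_vars_def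
proof
  fix m assume "m \<in> Poly_Mapping.keys (p * q)"
  then obtain a b where "m = a + b" "a \<in> Poly_Mapping.keys p" "b \<in> Poly_Mapping.keys q"
    using keys_mult[of p q] by blast
  then show "Poly_Mapping.keys m \<subseteq> {..<n}"
    using assms keys_add[of a b] unfolding in_vars_def by blast
qed

lemma in_vars_sum:
  "(\<And>i. i \<in> A \<Longrightarrow> in_vars n (f i)) \<Longrightarrow> in_vars n (\<Sum>i\<in>A. f i :: 'b::comm_monoid_add mpoly)"
  by (induction A rule: infinite_finite_induct) (auto intro: in_vars_add)

lemma in_vars_prod:
  "(\<And>i. i \<in> A \<Longrightarrow> in_vars n (f i)) \<Longrightarrow> in_vars n (\<Prod>i\<in>A. f i :: 'b::comm_semiring_1 mpoly)"
  by (induction A rule: infinite_finite_induct) (auto intro: in_vars_mult)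

lemma in_vars_power: "in_vars n p \<Longrightarrow> in_vars n (p ^ m :: 'b::comm_semiring_1 mpoly)"
  by (induction m) (auto intro: in_vars_mult)

definition monom_val :: "(nat \<Rightarrow>\<^sub>0 nat) \<Rightarrow> (nat \<Rightarrow> complex) \<Rightarrow> complex" where
  "monom_val a x = (\<Prod>i\<in>Poly_Mapping.keys a. x i ^ Poly_Mapping.lookup a i)"

lemma monom_val_superset:
  "finite K \<Longrightarrow> Poly_Mapping.keys a \<subseteq> K \<Longrightarrow>
    monom_val a x = (\<Prod>i\<in>K. x i ^ Poly_Mapping.lookup a i)"
  unfolding monom_val_def by (rule prod.mono_neutral_left) (auto simp: in_keys_iff)

lemma monom_val_add: "monom_val (a + b) x = monom_val a x * monom_val b x"
proof -
  let ?K = "Poly_Mapping.keys a \<union> Poly_Mapping.keys b"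
  have "monom_val (a + b) x = (\<Prod>i\<in>?K. x i ^ Poly_Mapping.lookup (a + b) i)"
    by (rule monom_val_superset) (auto dest: set_mp[OF keys_add])
  also have "\<dots> = (\<Prod>i\<in>?K. x i ^ Poly_Mapping.lookup a i) * (\<Prod>i\<in>?K. x i ^ Poly_Mapping.lookup b i)"
    by (simp add: lookup_add power_add prod.distrib)
  also have "\<dots> = monom_val a x * monom_val b x"
    using monom_val_superset[of ?K a x] monom_val_superset[of ?K b x] by simp
  finally show ?thesis .
qed

lemma peval_superset:
  "finite A \<Longrightarrow> Poly_Mapping.keys p \<subseteq> A \<Longrightarrow>
    peval p x = (\<Sum>a\<in>A. Poly_Mapping.lookup p a * monom_val a x)"
  unfolding peval_def monom_val_def[symmetric]
  by (rule sum.mono_neutral_left) (auto simp: in_keys_iff)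

lemma peval_zero [simp]: "peval 0 x = 0"
  by (simp add: peval_def)

lemma peval_single [simp]: "peval (Poly_Mapping.single a c) x = c * monom_val a x"
  by (subst peval_superset[of "{a}"]) auto

lemma peval_one [simp]: "peval 1 x = 1"
  using peval_single[of 0 1 x] by (simp add: monom_val_def del: peval_single)

lemma peval_add: "peval (p + q) x = peval p x + peval q x"
proof -
  let ?K = "Poly_Mapping.keys p \<union> Poly_Mapping.keys q"
  have "peval (p + q) x = (\<Sum>a\<in>?K. Poly_Mapping.lookup (p + q) a * monom_val a x)"
    by (rule peval_superset) (auto dest: set_mp[OF keys_add])
  also have "\<dots> = (\<Sum>a\<in>?K. Poly_Mapping.lookup p a * monom_val a x) +
      (\<Sum>a\<in>?K. Poly_Mapping.lookup q a * monom_val a x)"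
    by (simp add: lookup_add distrib_right sum.distrib)
  also have "\<dots> = peval p x + peval q x"
    using peval_superset[of ?K p x] peval_superset[of ?K q x] by simp
  finally show ?thesis .
qed

lemma peval_sum: "peval (\<Sum>i\<in>A. f i) x = (\<Sum>i\<in>A. peval (f i) x)"
  by (induction A rule: infinite_finite_induct) (auto simp: peval_add)

lemma peval_mult: "peval (p * q) x = peval p x * peval q x"
proof -
  have "p * q = (\<Sum>a\<in>Poly_Mapping.keys p. \<Sum>b\<in>Poly_Mapping.keys q.
      Poly_Mapping.single (a + b) (Poly_Mapping.lookup p a * Poly_Mapping.lookup q b))"
    by (subst (1 2) poly_mapping_sum_single[OF finite_keys order_refl])
       (simp add: sum_product mult_single)
  then have "peval (p * q) x = (\<Sum>a\<in>Poly_Mapping.keys p. \<Sum>b\<in>Poly_Mapping.keys q.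
      Poly_Mapping.lookup p a * monom_val a x * (Poly_Mapping.lookup q b * monom_val b x))"
    by (simp add: peval_sum monom_val_add mult_ac)
  also have "\<dots> = peval p x * peval q x"
    by (simp add: sum_product peval_def monom_val_def)
  finally show ?thesis .
qed

lemma peval_power: "peval (p ^ m) x = peval p x ^ m"
  by (induction m) (auto simp: peval_mult)

definition cst :: "complex \<Rightarrow> complex mpoly" where
  "cst c = Poly_Mapping.single 0 c"

definition var :: "nat \<Rightarrow> complex mpoly" where
  "var i = Poly_Mapping.single (Poly_Mapping.single i 1) 1"

lemma in_vars_cst [simp]: "in_vars n (cst c)"
  by (simp add: cst_def in_vars_def)

lemma in_vars_var: "i < n \<Longrightarrow> in_vars n (var i)"
  by (simp add: var_def in_vars_def)

lemma cst_0 [simp]: "cst 0 = 0"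
  by (simp add: cst_def)

lemma cst_1 [simp]: "cst 1 = 1"
  by (simp add: cst_def)

lemma cst_add: "cst (a + b) = cst a + cst b"
  by (simp add: cst_def single_add)

lemma cst_uminus: "cst (- a) = - cst a"
  by (simp add: cst_def single_uminus)

lemma cst_mult: "cst (a * b) = cst a * cst b"
  by (simp add: cst_def mult_single)

lemma cst_sum: "cst (\<Sum>i\<in>A. f i) = (\<Sum>i\<in>A. cst (f i))"
  by (induction A rule: infinite_finite_induct) (auto simp: cst_add)

lemma cst_prod: "cst (\<Prod>i\<in>A. f i) = (\<Prod>i\<in>A. cst (f i))"
  by (induction A rule: infinite_finite_induct) (auto simp: cst_mult)

lemma cst_power: "cst (a ^ m) = cst a ^ m"
  by (induction m) (auto simp: cst_mult)

lemma lookup_cst_mult: "Poly_Mapping.lookup (cst a * p) k = a * Poly_Mapping.lookup p k"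
  by (simp add: cst_def flip: mult_map_scale_conv_mult) (simp add: Poly_Mapping.map.rep_eq when_def)

lemma peval_cst [simp]: "peval (cst c) x = c"
  by (simp add: cst_def monom_val_def)

lemma single_eq_cst_mult: "Poly_Mapping.single a c = cst c * Poly_Mapping.single a 1"
  by (simp add: cst_def mult_single)

lemma var_power: "var i ^ k = Poly_Mapping.single (Poly_Mapping.single i k) 1"
  by (induction k) (simp_all add: var_def mult_single flip: single_add)

lemma single_eq_prod_var_power:
  "Poly_Mapping.single a 1 = (\<Prod>i\<in>Poly_Mapping.keys a. var i ^ Poly_Mapping.lookup a i)"
proof -
  have "(\<Prod>i\<in>A. Poly_Mapping.single (b i) (1::complex)) = Poly_Mapping.single (\<Sum>i\<in>A. b i) 1"
    for A and b :: "nat \<Rightarrow> nat \<Rightarrow>\<^sub>0 nat"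
    by (induction A rule: infinite_finite_induct) (simp_all add: mult_single)
  then show ?thesis
    by (simp add: var_power flip: poly_mapping_sum_single[OF finite_keys order_refl])
qed

definition poly_ideal :: "nat \<Rightarrow> complex mpoly set \<Rightarrow> bool" where
  "poly_ideal n K \<longleftrightarrow> K \<subseteq> {p. in_vars n p} \<and> 0 \<in> K \<and> (\<forall>a\<in>K. \<forall>b\<in>K. a + b \<in> K)
     \<and> (\<forall>r a. in_vars n r \<longrightarrow> a \<in> K \<longrightarrow> r * a \<in> K)"

lemma
  assumes "poly_ideal n K"
  shows poly_ideal_in_vars: "a \<in> K \<Longrightarrow> in_vars n a"
    and poly_ideal_zero: "0 \<in> K"
    and poly_ideal_add: "a \<in> K \<Longrightarrow> b \<in> K \<Longrightarrow> a + b \<in> K"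
    and poly_ideal_mult: "in_vars n r \<Longrightarrow> a \<in> K \<Longrightarrow> r * a \<in> K"
  using assms unfolding poly_ideal_def by blast+

lemma poly_ideal_mult_right: "poly_ideal n K \<Longrightarrow> in_vars n r \<Longrightarrow> a \<in> K \<Longrightarrow> a * r \<in> K"
  using poly_ideal_mult[of n K r a] by (simp add: mult.commute)

lemma poly_ideal_diff: "poly_ideal n K \<Longrightarrow> a \<in> K \<Longrightarrow> b \<in> K \<Longrightarrow> a - b \<in> K"
  using poly_ideal_add[of n K a "- 1 * b"] poly_ideal_mult[of n K "- 1" b] by (simp add: in_vars_uminus)

lemma poly_ideal_sum: "poly_ideal n K \<Longrightarrow> (\<And>i. i \<in> A \<Longrightarrow> f i \<in> K) \<Longrightarrow> (\<Sum>i\<in>A. f i) \<in> K"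
  by (induction A rule: infinite_finite_induct) (auto intro: poly_ideal_zero poly_ideal_add)

lemma poly_ideal_mult_cong:
  assumes K: "poly_ideal n K" and "a - b \<in> K" "c - d \<in> K" "in_vars n b" "in_vars n c"
  shows "a * c - b * d \<in> K"
proof -
  have "a * c - b * d = (a - b) * c + b * (c - d)"
    by (simp add: algebra_simps)
  also have "\<dots> \<in> K"
    using assms by (intro poly_ideal_add[OF K] poly_ideal_mult[OF K] poly_ideal_mult_right[OF K])
  finally show ?thesis .
qed

lemma poly_ideal_power_cong:
  assumes K: "poly_ideal n K" and "a - b \<in> K" "in_vars n a" "in_vars n b"
  shows "a ^ k - b ^ k \<in> K"
proof (induction k)
  case 0
  then show ?case
    using poly_ideal_zero[OF K] by simp
next
  case (Suc k)
  then show ?case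
    using assms poly_ideal_mult_cong[OF K, of a b "a ^ k" "b ^ k"] by (simp add: in_vars_power)
qed

lemma poly_ideal_prod_cong:
  assumes K: "poly_ideal n K"
    and "\<And>i. i \<in> A \<Longrightarrow> g i - h i \<in> K \<and> in_vars n (g i) \<and> in_vars n (h i)"
  shows "(\<Prod>i\<in>A. g i) - (\<Prod>i\<in>A. h i) \<in> K"
  using assms(2)
proof (induction A rule: infinite_finite_induct)
  case (insert x F)
  then show ?case
    by (simp, intro poly_ideal_mult_cong[OF K]) (auto intro: in_vars_prod)
qed (use poly_ideal_zero[OF K] in simp_all)

lemma poly_ideal_sub_cst_peval:
  assumes K: "poly_ideal n K" and z: "\<And>j. j < n \<Longrightarrow> var j - cst (z j) \<in> K" and p: "in_vars n p"
  shows "p - cst (peval p z) \<in> K"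
proof -
  have monomial: "Poly_Mapping.single a 1 - cst (monom_val a z) \<in> K"
    if "Poly_Mapping.keys a \<subseteq> {..<n}" for a
  proof -
    have "(\<Prod>i\<in>Poly_Mapping.keys a. var i ^ Poly_Mapping.lookup a i) -
        (\<Prod>i\<in>Poly_Mapping.keys a. cst (z i) ^ Poly_Mapping.lookup a i) \<in> K"
      using that z by (intro poly_ideal_prod_cong[OF K])
        (auto intro!: poly_ideal_power_cong[OF K] in_vars_power in_vars_var)
    then show ?thesis
      by (simp add: monom_val_def cst_prod cst_power flip: single_eq_prod_var_power)
  qed
  have "p = (\<Sum>a\<in>Poly_Mapping.keys p. cst (Poly_Mapping.lookup p a) * Poly_Mapping.single a 1)"
    by (subst poly_mapping_sum_single[OF finite_keys order_refl]) (simp flip: single_eq_cst_mult)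
  moreover have "cst (peval p z) =
      (\<Sum>a\<in>Poly_Mapping.keys p. cst (Poly_Mapping.lookup p a) * cst (monom_val a z))"
    by (simp add: peval_def monom_val_def cst_sum cst_mult)
  ultimately have "p - cst (peval p z) = (\<Sum>a\<in>Poly_Mapping.keys p.
      cst (Poly_Mapping.lookup p a) * (Poly_Mapping.single a 1 - cst (monom_val a z)))"
    by (simp add: right_diff_distrib sum_subtractf)
  also have "\<dots> \<in> K"
    using p by (intro poly_ideal_sum[OF K] poly_ideal_mult[OF K] monomial) (auto simp: in_vars_def[of n p])
  finally show ?thesis .
qed

section \<open>Hilbert's Nullstellensatz\<close>

lemma poly_ideal_Union_chain:
  assumes "\<C> \<noteq> {}" "\<And>K. K \<in> \<C> \<Longrightarrow> poly_ideal n K"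
    and chain: "\<And>K L. K \<in> \<C> \<Longrightarrow> L \<in> \<C> \<Longrightarrow> K \<subseteq> L \<or> L \<subseteq> K"
  shows "poly_ideal n (\<Union>\<C>)"
  unfolding poly_ideal_def
proof (intro conjI allI impI ballI)
  show "\<Union>\<C> \<subseteq> {p. in_vars n p}" "0 \<in> \<Union>\<C>"
    using assms(1,2) poly_ideal_in_vars poly_ideal_zero by blast+
next
  fix a b assume "a \<in> \<Union>\<C>" "b \<in> \<Union>\<C>"
  then obtain K L where "K \<in> \<C>" "L \<in> \<C>" "a \<in> K" "b \<in> L"
    by blast
  with chain[of K L] show "a + b \<in> \<Union>\<C>"
    using assms(2) poly_ideal_add by blast
next
  fix r a assume "in_vars n (r :: complex mpoly)" "a \<in> \<Union>\<C>"
  then show "r * a \<in> \<Union>\<C>"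
    using assms(2) poly_ideal_mult by blast
qed

lemma poly_ideal_extend:
  assumes M: "poly_ideal n M" and a: "in_vars n a"
  shows "poly_ideal n {m + r * a | m r. m \<in> M \<and> in_vars n r}"
  unfolding poly_ideal_def
proof (intro conjI allI impI ballI)
  show "{m + r * a | m r. m \<in> M \<and> in_vars n r} \<subseteq> {p. in_vars n p}"
    using poly_ideal_in_vars[OF M] a by (auto intro!: in_vars_add in_vars_mult)
  show "0 \<in> {m + r * a | m r. m \<in> M \<and> in_vars n r}"
    using poly_ideal_zero[OF M] by force
next
  fix x y assume "x \<in> {m + r * a | m r. m \<in> M \<and> in_vars n r}" "y \<in> {m + r * a | m r. m \<in> M \<and> in_vars n r}"
  then obtain m1 r1 m2 r2 where "x = m1 + r1 * a" "y = m2 + r2 * a"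
    "m1 \<in> M" "m2 \<in> M" "in_vars n r1" "in_vars n r2"
    by blast
  then have "x + y = (m1 + m2) + (r1 + r2) * a"
    by (simp add: algebra_simps)
  then show "x + y \<in> {m + r * a | m r. m \<in> M \<and> in_vars n r}"
    using \<open>m1 \<in> M\<close> \<open>m2 \<in> M\<close> \<open>in_vars n r1\<close> \<open>in_vars n r2\<close>
      poly_ideal_add[OF M] in_vars_add by blast
next
  fix s x assume s: "in_vars n (s :: complex mpoly)" and "x \<in> {m + r * a | m r. m \<in> M \<and> in_vars n r}"
  then obtain m r where "x = m + r * a" "m \<in> M" "in_vars n r"
    by blast
  then have "s * x = s * m + (s * r) * a" "m \<in> M" "in_vars n r"
    by (simp_all add: algebra_simps)
  then show "s * x \<in> {m + r * a | m r. m \<in> M \<and> in_vars n r}"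
    using s poly_ideal_mult[OF M] in_vars_mult by blast
qed

locale max_avoiding =
  fixes n :: nat and f :: "complex mpoly" and M :: "complex mpoly set"
  assumes ideal: "poly_ideal n M" and in_vars_f: "in_vars n f"
    and avoids: "\<And>m. f ^ m \<notin> M"
    and maximal: "\<And>K. poly_ideal n K \<Longrightarrow> M \<subseteq> K \<Longrightarrow> (\<forall>m. f ^ m \<notin> K) \<Longrightarrow> K = M"

lemma exists_max_avoiding:
  assumes J: "poly_ideal n J" and f: "in_vars n f" and avoids: "\<forall>m. f ^ m \<notin> J"
  obtains M where "J \<subseteq> M" "max_avoiding n f M"
proof -
  define \<A> where "\<A> = {K. poly_ideal n K \<and> J \<subseteq> K \<and> (\<forall>m. f ^ m \<notin> K)}"
  have "\<exists>M\<in>\<A>. \<forall>K\<in>\<A>. M \<subseteq> K \<longrightarrow> K = M"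
  proof (rule subset_Zorn_nonempty)
    show "\<A> \<noteq> {}"
      using J avoids by (auto simp: \<A>_def)
  next
    fix \<C> assume ne: "\<C> \<noteq> {}" and "subset.chain \<A> \<C>"
    then have sub: "\<C> \<subseteq> \<A>" and chain: "\<And>K L. K \<in> \<C> \<Longrightarrow> L \<in> \<C> \<Longrightarrow> K \<subseteq> L \<or> L \<subseteq> K"
      by (auto simp: subset_chain_def)
    have "poly_ideal n (\<Union>\<C>)"
      using ne sub chain by (intro poly_ideal_Union_chain) (auto simp: \<A>_def)
    moreover have "J \<subseteq> \<Union>\<C>" "\<forall>m. f ^ m \<notin> \<Union>\<C>"
      using ne sub by (auto simp: \<A>_def)
    ultimately show "\<Union>\<C> \<in> \<A>"
      by (simp add: \<A>_def)
  qed
  then obtain M where "M \<in> \<A>" "\<forall>K\<in>\<A>. M \<subseteq> K \<longrightarrow> K = M"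
    by blast
  then have "max_avoiding n f M"
    using f by unfold_locales (auto simp: \<A>_def)
  with \<open>M \<in> \<A>\<close> show thesis
    using that by (auto simp: \<A>_def)
qed

definition upoly_at :: "complex mpoly \<Rightarrow> complex poly \<Rightarrow> complex mpoly" where
  "upoly_at X q = poly (map_poly cst q) X"

lemma upoly_at_0 [simp]: "upoly_at X 0 = 0"
  by (simp add: upoly_at_def)

lemma upoly_at_pCons: "upoly_at X (pCons a p) = cst a + X * upoly_at X p"
  by (simp add: upoly_at_def map_poly_pCons)

lemma upoly_at_const [simp]: "upoly_at X [:c:] = cst c"
  by (simp add: upoly_at_pCons)

lemma upoly_at_1 [simp]: "upoly_at X 1 = 1"
  by (metis upoly_at_const cst_1 one_pCons)

lemma upoly_at_add: "upoly_at X (p + q) = upoly_at X p + upoly_at X q"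
  by (induction p q rule: poly_induct2) (simp_all add: upoly_at_pCons cst_add algebra_simps)

lemma upoly_at_smult: "upoly_at X (smult a q) = cst a * upoly_at X q"
  by (induction q) (simp_all add: upoly_at_pCons cst_mult algebra_simps)

lemma upoly_at_mult: "upoly_at X (p * q) = upoly_at X p * upoly_at X q"
  by (induction p) (simp_all add: upoly_at_pCons upoly_at_add upoly_at_smult algebra_simps)

lemma upoly_at_linear: "upoly_at X [:-d, 1:] = X - cst d"
  by (simp add: upoly_at_pCons cst_uminus)

lemma upoly_at_sum: "upoly_at X (\<Sum>i\<in>A. f i) = (\<Sum>i\<in>A. upoly_at X (f i))"
  by (induction A rule: infinite_finite_induct) (auto simp: upoly_at_add)

lemma upoly_at_prod: "upoly_at X (\<Prod>i\<in>A. f i) = (\<Prod>i\<in>A. upoly_at X (f i))"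
  by (induction A rule: infinite_finite_induct) (auto simp: upoly_at_mult)

lemma in_vars_upoly_at: "in_vars n X \<Longrightarrow> in_vars n (upoly_at X q)"
  by (induction q) (simp_all add: upoly_at_pCons in_vars_add in_vars_mult)

lemma exists_linear_relation:
  fixes v :: "'c \<Rightarrow> complex mpoly"
  assumes "finite F" "finite B" "card F < card B" "\<And>c. c \<in> B \<Longrightarrow> Poly_Mapping.keys (v c) \<subseteq> F"
  shows "\<exists>a. (\<exists>c\<in>B. a c \<noteq> 0) \<and> (\<Sum>c\<in>B. cst (a c) * v c) = 0"
  using assms
proof (induction F arbitrary: B v rule: finite_induct)
  case empty
  then obtain c0 where "c0 \<in> B"
    by fastforce
  moreover have "\<forall>c\<in>B. v c = 0"
    using empty.prems(3) by (simp add: subset_empty)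
  ultimately show ?case
    by (intro exI[of _ "\<lambda>c. if c = c0 then 1 else 0"]) auto
next
  case (insert \<alpha> F)
  show ?case
  proof (cases "\<forall>c\<in>B. Poly_Mapping.lookup (v c) \<alpha> = 0")
    case True
    have "Poly_Mapping.keys (v c) \<subseteq> F" if c: "c \<in> B" for c
    proof
      fix k assume "k \<in> Poly_Mapping.keys (v c)"
      then show "k \<in> F"
        using insert.prems(3)[OF c] True c by (auto simp: in_keys_iff)
    qed
    moreover have "card F < card B"
      using insert.prems(2) insert.hyps by simp
    ultimately show ?thesis
      using insert.IH[OF insert.prems(1)] by blast
  next
    case False
    text \<open>Gaussian elimination of the monomial \<open>\<alpha>\<close> using a pivot \<open>c0\<close>.\<close>
    then obtain c0 where c0: "c0 \<in> B" "Poly_Mapping.lookup (v c0) \<alpha> \<noteq> 0"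
      by blast
    define t where "t c = Poly_Mapping.lookup (v c) \<alpha> / Poly_Mapping.lookup (v c0) \<alpha>" for c
    define w where "w c = v c - cst (t c) * v c0" for c
    define B' where "B' = B - {c0}"
    have "\<And>c. c \<in> B' \<Longrightarrow> Poly_Mapping.keys (w c) \<subseteq> F"
    proof (intro subsetI)
      fix c k assume c: "c \<in> B'" and k: "k \<in> Poly_Mapping.keys (w c)"
      have "Poly_Mapping.lookup (w c) \<alpha> = 0"
        using c0 by (simp add: w_def lookup_minus lookup_cst_mult t_def)
      then have "k \<noteq> \<alpha>"
        using k by (auto simp: in_keys_iff)
      moreover have "k \<in> Poly_Mapping.keys (v c) \<or> k \<in> Poly_Mapping.keys (v c0)"
        using k by (auto simp: in_keys_iff w_def lookup_minus lookup_cst_mult)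
      ultimately show "k \<in> F"
        using insert.prems(3) c c0 unfolding B'_def by blast
    qed
    moreover have "finite B'" "card F < card B'"
      using insert.prems(1,2) insert.hyps c0 by (simp_all add: B'_def)
    ultimately obtain b where b: "\<exists>c\<in>B'. b c \<noteq> 0" "(\<Sum>c\<in>B'. cst (b c) * w c) = 0"
      using insert.IH[of B' w] by blast
    define a where "a c = (if c = c0 then - (\<Sum>c\<in>B'. b c * t c) else b c)" for c
    have "(\<Sum>c\<in>B. cst (a c) * v c) = cst (a c0) * v c0 + (\<Sum>c\<in>B'. cst (a c) * v c)"
      using c0 insert.prems(1) by (simp add: B'_def sum.remove)
    also have "(\<Sum>c\<in>B'. cst (a c) * v c) = (\<Sum>c\<in>B'. cst (b c) * v c)"
      by (intro sum.cong) (auto simp: a_def B'_def)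
    also have "(\<Sum>c\<in>B'. cst (b c) * v c) = (\<Sum>c\<in>B'. cst (b c) * w c) + cst (\<Sum>c\<in>B'. b c * t c) * v c0"
      by (simp add: w_def right_diff_distrib sum_subtractf cst_sum cst_mult sum_distrib_right mult.assoc)
    finally have "(\<Sum>c\<in>B. cst (a c) * v c) = 0"
      using b(2) by (simp add: a_def cst_uminus)
    moreover have "\<exists>c\<in>B. a c \<noteq> 0"
      using b(1) by (auto simp: a_def B'_def)
    ultimately show ?thesis
      by blast
  qed
qed

lemma uncountable_infinite_fibre:
  fixes \<phi> :: "'a \<Rightarrow> 'b"
  assumes "uncountable (UNIV :: 'a set)" "countable (range \<phi>)"
  obtains y where "infinite (\<phi> -` {y})"
proof (rule ccontr)
  assume "\<not> thesis"
  then have "countable (\<Union>y\<in>range \<phi>. \<phi> -` {y})"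
    using that assms(2) by (intro countable_UN) (auto intro: countable_finite)
  moreover have "(\<Union>y\<in>range \<phi>. \<phi> -` {y}) = UNIV"
    by auto
  ultimately show False
    using assms(1) by simp
qed

lemma countable_monomials: "countable (UNIV :: (nat \<Rightarrow>\<^sub>0 nat) set)"
proof (rule countable_image_inj_on)
  show "countable (range (Poly_Mapping.items :: (nat \<Rightarrow>\<^sub>0 nat) \<Rightarrow> _))"
    by (rule countable_subset[OF subset_UNIV]) simp
  show "inj (Poly_Mapping.items :: (nat \<Rightarrow>\<^sub>0 nat) \<Rightarrow> _)"
    by (metis injI the_value_items)
qed

definition lagrange_combination :: "complex set \<Rightarrow> (complex \<Rightarrow> complex) \<Rightarrow> complex poly" where
  "lagrange_combination B a = (\<Sum>c\<in>B. smult (a c) (\<Prod>l\<in>B - {c}. [:-l, 1:]))"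

lemma lagrange_combination_nonzero:
  assumes "finite B" "c0 \<in> B" "a c0 \<noteq> 0"
  shows "lagrange_combination B a \<noteq> 0"
proof -
  have "poly (lagrange_combination B a) c0 = (\<Sum>c\<in>B. if c = c0 then a c0 * (\<Prod>l\<in>B - {c0}. c0 - l) else 0)"
    unfolding lagrange_combination_def poly_sum
  proof (intro sum.cong refl)
    fix c assume "c \<in> B"
    then have "c \<noteq> c0 \<Longrightarrow> (\<Prod>l\<in>B - {c}. c0 - l) = 0"
      using assms by (intro prod_zero) auto
    then show "poly (smult (a c) (\<Prod>l\<in>B - {c}. [:-l, 1:])) c0 =
        (if c = c0 then a c0 * (\<Prod>l\<in>B - {c0}. c0 - l) else 0)"
      by (simp add: poly_prod)
  qed
  also have "\<dots> \<noteq> 0"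
    using assms by simp
  finally show ?thesis
    by auto
qed

context max_avoiding
begin

lemma power_eq_add_mult:
  assumes a: "in_vars n a" "a \<notin> M"
  obtains k m r where "m \<in> M" "in_vars n r" "f ^ k = m + r * a"
proof -
  define K where "K = {m + r * a | m r. m \<in> M \<and> in_vars n r}"
  have "poly_ideal n K"
    unfolding K_def using ideal a(1) by (rule poly_ideal_extend)
  moreover have "M \<subseteq> K"
    unfolding K_def by (force intro: exI[of _ 0])
  moreover have "a \<in> K"
    unfolding K_def using poly_ideal_zero[OF ideal] by force
  ultimately obtain k where "f ^ k \<in> K"
    using maximal a(2) by blast
  then show thesis
    using that unfolding K_def by blast
qed

lemma prime:
  assumes "in_vars n a" "in_vars n b" "a * b \<in> M"
  shows "a \<in> M \<or> b \<in> M"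
proof (rule ccontr)
  assume "\<not> (a \<in> M \<or> b \<in> M)"
  then obtain k1 m1 r1 k2 m2 r2 where 1: "m1 \<in> M" "in_vars n r1" "f ^ k1 = m1 + r1 * a"
    and 2: "m2 \<in> M" "in_vars n r2" "f ^ k2 = m2 + r2 * b"
    using power_eq_add_mult assms by metis
  have in_vars: "in_vars n m1" "in_vars n m2"
    using 1 2 poly_ideal_in_vars[OF ideal] by auto
  have "f ^ (k1 + k2) = (m2 + r2 * b) * m1 + (r1 * a) * m2 + (r1 * r2) * (a * b)"
    by (simp add: power_add 1(3) 2(3) algebra_simps)
  also have "\<dots> \<in> M"
    by (intro poly_ideal_add[OF ideal]; rule poly_ideal_mult[OF ideal])
      (use 1 2 assms in_vars in \<open>auto intro: in_vars_add in_vars_mult\<close>)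
  finally show False
    using avoids by blast
qed

lemma cst_memD: "cst c \<in> M \<Longrightarrow> c = 0"
proof (rule ccontr)
  assume "cst c \<in> M" "c \<noteq> 0"
  then have "cst (1 / c) * cst c \<in> M"
    by (intro poly_ideal_mult[OF ideal]) auto
  then have "f ^ 0 \<in> M"
    using \<open>c \<noteq> 0\<close> by (simp flip: cst_mult)
  then show False
    using avoids by blast
qed

text \<open>Over the algebraically closed field \<open>\<complex>\<close>, \<open>q\<close> splits into linear factors, none of which lies
  in the prime ideal \<open>M\<close>.\<close>

lemma upoly_at_not_mem:
  assumes X: "in_vars n X" and not_mem: "\<And>c. X - cst c \<notin> M"
  shows "q \<noteq> 0 \<Longrightarrow> upoly_at X q \<notin> M"
proof (induction "degree q" arbitrary: q rule: less_induct)
  case less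
  show ?case
  proof (cases "degree q = 0")
    case True
    then obtain c where "q = [:c:]" "c \<noteq> 0"
      using less.prems by (metis degree_eq_zeroE pCons_0_0)
    then show ?thesis
      using cst_memD by auto
  next
    case False
    then obtain d where "poly q d = 0"
      using alg_closed_imp_poly_has_root by blast
    then have "[:-d, 1:] dvd q"
      by (simp add: dvd_iff_poly_eq_0)
    then obtain r where q: "q = [:-d, 1:] * r"
      by (elim dvdE)
    with less.prems have "r \<noteq> 0"
      by auto
    then have "degree r < degree q"
      unfolding q by (subst degree_mult_eq) auto
    then have "upoly_at X r \<notin> M"
      using less.hyps \<open>r \<noteq> 0\<close> by blast
    moreover have "upoly_at X q = (X - cst d) * upoly_at X r"
      unfolding q by (simp only: upoly_at_mult upoly_at_linear)
    ultimately show ?thesis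
      using prime not_mem X in_vars_upoly_at[OF X] by (metis in_vars_cst in_vars_diff)
  qed
qed

lemma lagrange_combination_mem:
  assumes X: "in_vars n X" and B: "finite B"
    and G: "\<And>c. c \<in> B \<Longrightarrow> in_vars n (G c) \<and> f ^ k - G c * (X - cst c) \<in> M"
    and relation: "(\<Sum>c\<in>B. cst (a c) * G c) = 0"
  shows "upoly_at X (lagrange_combination B a) \<in> M"
proof -
  define P where "P c = (\<Prod>l\<in>B - {c}. X - cst l)" for c
  define Q where "Q = (\<Sum>c\<in>B. cst (a c) * P c)"
  have in_vars_P: "in_vars n (P c)" for c
    using X by (auto simp: P_def intro!: in_vars_prod in_vars_diff)
  have split: "(X - cst c) * P c = (\<Prod>l\<in>B. X - cst l)" if "c \<in> B" for c
    using that B by (simp add: P_def prod.remove)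
  have "f ^ k * Q = (\<Sum>c\<in>B. cst (a c) * P c * (f ^ k - G c * (X - cst c)) +
      cst (a c) * G c * ((X - cst c) * P c))"
    unfolding Q_def sum_distrib_left by (intro sum.cong refl) (simp add: algebra_simps)
  also have "\<dots> = (\<Sum>c\<in>B. cst (a c) * P c * (f ^ k - G c * (X - cst c))) +
      (\<Sum>c\<in>B. cst (a c) * G c * ((X - cst c) * P c))"
    by (rule sum.distrib)
  also have "(\<Sum>c\<in>B. cst (a c) * G c * ((X - cst c) * P c)) =
      (\<Sum>c\<in>B. cst (a c) * G c) * (\<Prod>l\<in>B. X - cst l)"
    unfolding sum_distrib_right by (intro sum.cong refl) (simp add: split)
  finally have "f ^ k * Q \<in> M"
    using G in_vars_P relation by (simp, intro poly_ideal_sum[OF ideal] poly_ideal_mult[OF ideal]) (auto intro: in_vars_mult)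
  moreover have "in_vars n Q"
    using in_vars_P by (auto simp: Q_def intro!: in_vars_sum in_vars_mult)
  ultimately have "Q \<in> M"
    using prime in_vars_power[OF in_vars_f] avoids by blast
  then show ?thesis
    by (simp add: Q_def P_def lagrange_combination_def upoly_at_sum upoly_at_smult upoly_at_prod upoly_at_linear)
qed

end

context max_avoiding
begin

text \<open>Modulo \<open>M\<close> every polynomial is congruent to a constant: otherwise uncountably many
  \<open>X - c\<close> lie outside \<open>M\<close>, and the resulting witnesses, having countably many shapes, yield
  a linear relation that forces a nonzero univariate polynomial in \<open>X\<close> into \<open>M\<close>.\<close>

lemma exists_cst_mem:
  assumes X: "in_vars n X"
  shows "\<exists>c. X - cst c \<in> M"
proof (rule ccontr)
  assume "\<nexists>c. X - cst c \<in> M"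
  then have not_mem: "\<And>c. X - cst c \<notin> M"
    by blast
  have "\<exists>k G. in_vars n G \<and> f ^ k - G * (X - cst c) \<in> M" for c
  proof -
    have "in_vars n (X - cst c)"
      using X by (simp add: in_vars_diff)
    then obtain k m G where "m \<in> M" "in_vars n G" "f ^ k = m + G * (X - cst c)"
      using power_eq_add_mult not_mem by blast
    then show ?thesis
      by (intro exI[of _ k] exI[of _ G]) simp
  qed
  then obtain K G where KG: "\<And>c. in_vars n (G c) \<and> f ^ K c - G c * (X - cst c) \<in> M"
    by metis
  define \<phi> where "\<phi> c = (K c, Poly_Mapping.keys (G c))" for c
  have "range \<phi> \<subseteq> (UNIV :: nat set) \<times> {S. finite S \<and> S \<subseteq> UNIV}"
    by (auto simp: \<phi>_def)
  moreover have "countable ((UNIV :: nat set) \<times> {S :: (nat \<Rightarrow>\<^sub>0 nat) set. finite S \<and> S \<subseteq> UNIV})"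
    using countable_Collect_finite_subset[OF countable_monomials] by (intro countable_SIGMA) auto
  ultimately have "countable (range \<phi>)"
    by (rule countable_subset)
  then obtain y where "infinite (\<phi> -` {y})"
    by (rule uncountable_infinite_fibre[OF uncountable_UNIV_complex])
  then obtain k F where fibre: "infinite (\<phi> -` {(k, F)})"
    by (cases y) auto
  then have "\<phi> -` {(k, F)} \<noteq> {}"
    by (metis finite.emptyI)
  then obtain c1 where "\<phi> c1 = (k, F)"
    by blast
  then have "finite F"
    by (auto simp: \<phi>_def)
  obtain B where B: "B \<subseteq> \<phi> -` {(k, F)}" "finite B" "card B = Suc (card F)"
    using infinite_arbitrarily_large[OF fibre] by blast
  then have shape: "\<And>c. c \<in> B \<Longrightarrow> K c = k \<and> Poly_Mapping.keys (G c) = F"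
    by (auto simp: \<phi>_def)
  obtain a where a: "\<exists>c\<in>B. a c \<noteq> 0" "(\<Sum>c\<in>B. cst (a c) * G c) = 0"
    using exists_linear_relation[OF \<open>finite F\<close> B(2), of G] B(3) shape by auto
  have "upoly_at X (lagrange_combination B a) \<in> M"
    using X B(2) KG shape a(2) by (intro lagrange_combination_mem[where k = k]) auto
  moreover have "lagrange_combination B a \<noteq> 0"
    using a(1) B(2) lagrange_combination_nonzero by blast
  ultimately show False
    using upoly_at_not_mem[OF X not_mem] by blast
qed

end

theorem weak_nullstellensatz:
  assumes J: "poly_ideal n J" and f: "in_vars n f" and avoids: "\<forall>m. f ^ m \<notin> J"
  obtains z where "z \<in> pts n" "\<And>p. p \<in> J \<Longrightarrow> peval p z = 0" "peval f z \<noteq> 0"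
proof -
  obtain M where "J \<subseteq> M" "max_avoiding n f M"
    using exists_max_avoiding[OF J f avoids] by blast
  interpret max_avoiding n f M
    by fact
  have "\<forall>j. \<exists>c. j < n \<longrightarrow> var j - cst c \<in> M"
    using exists_cst_mem[OF in_vars_var] by blast
  then obtain c where c: "\<And>j. j < n \<Longrightarrow> var j - cst (c j) \<in> M"
    by metis
  define z where "z j = (if j < n then c j else 0)" for j
  have z: "\<And>j. j < n \<Longrightarrow> var j - cst (z j) \<in> M"
    using c by (simp add: z_def)
  have value_mem: "p - cst (peval p z) \<in> M" if "in_vars n p" for p
    using poly_ideal_sub_cst_peval[OF ideal z that] .
  have "z \<in> pts n"
    by (simp add: pts_def z_def)
  moreover have "peval p z = 0" if "p \<in> J" for p
  proof -
    have "p \<in> M" "p - cst (peval p z) \<in> M"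
      using that \<open>J \<subseteq> M\<close> value_mem poly_ideal_in_vars[OF J] by auto
    then have "p - (p - cst (peval p z)) \<in> M"
      by (rule poly_ideal_diff[OF ideal])
    then show ?thesis
      by (simp add: cst_memD)
  qed
  moreover have "peval f z \<noteq> 0"
    using value_mem[OF f] avoids[of 1] by auto
  ultimately show thesis
    using that by blast
qed

theorem nullstellensatz:
  assumes J: "poly_ideal n J" and f: "in_vars n f"
    and vanishes: "\<And>z. z \<in> pts n \<Longrightarrow> \<forall>p\<in>J. peval p z = 0 \<Longrightarrow> peval f z = 0"
  shows "f \<in> crad J"
proof (rule ccontr)
  assume "f \<notin> crad J"
  then have positive_powers: "f ^ m \<notin> J" if "m \<ge> 1" for m
    using that by (simp add: crad_def)
  have avoids: "\<forall>m. f ^ m \<notin> J"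
  proof
    fix m
    show "f ^ m \<notin> J"
    proof (cases "m = 0")
      case True
      have "f ^ 0 \<in> J \<Longrightarrow> f * 1 \<in> J"
        using poly_ideal_mult[OF J f, of 1] by simp
      then show ?thesis
        using True positive_powers[of 1] by auto
    next
      case False
      then show ?thesis
        using positive_powers by simp
    qed
  qed
  obtain z where z: "z \<in> pts n" "\<And>p. p \<in> J \<Longrightarrow> peval p z = 0" "peval f z \<noteq> 0"
    using weak_nullstellensatz[OF J f avoids] by blast
  then show False
    using vanishes[OF z(1)] by simp
qed

lemma crad_vanishes:
  assumes "q \<in> crad J" "\<forall>p\<in>J. peval p z = 0"
  shows "peval q z = 0"
proof -
  obtain m where "m \<ge> 1" "q ^ m \<in> J"
    using assms(1) by (auto simp: crad_def)
  then have "peval q z ^ m = 0" "m \<noteq> 0"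
    using assms(2) by (simp_all add: flip: peval_power)
  then show ?thesis
    by simp
qed

section \<open>Fibres of the ideal \<open>I(U)\<close>\<close>

lemma lookup_fib: "Poly_Mapping.lookup (fib s p) a = Poly_Mapping.lookup p a s"
  by (auto simp: fib_def Poly_Mapping.map.rep_eq when_def)

lemma fib_eqI: "(\<And>a. Poly_Mapping.lookup q a = Poly_Mapping.lookup p a s) \<Longrightarrow> fib s p = q"
  by (rule poly_mapping_eqI) (simp add: lookup_fib)

lemma in_vars_fib: "in_vars n p \<Longrightarrow> in_vars n (fib s p)"
  by (auto simp: in_vars_def in_keys_iff lookup_fib)

lemma fib_zero [simp]: "fib s 0 = 0"
  by (rule fib_eqI) simp

lemma fib_add: "fib s (p + q) = fib s p + fib s q"
  by (rule fib_eqI) (simp add: lookup_add lookup_fib)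

lemma fib_mult: "fib s (p * q) = fib s p * fib s q"
proof (rule fib_eqI)
  fix k
  let ?A = "Poly_Mapping.keys p" and ?B = "Poly_Mapping.keys q"
  have "Poly_Mapping.lookup (fib s p * fib s q) k = (\<Sum>a\<in>?A. \<Sum>b\<in>?B.
      if k = a + b then Poly_Mapping.lookup (fib s p) a * Poly_Mapping.lookup (fib s q) b else 0)"
    by (rule lookup_mult_finite) (auto simp: in_keys_iff lookup_fib)
  also have "\<dots> = (\<Sum>a\<in>?A. \<Sum>b\<in>?B.
      if k = a + b then Poly_Mapping.lookup p a * Poly_Mapping.lookup q b else 0) s"
    by (simp add: lookup_fib sum_fun_apply) (intro sum.cong refl, simp add: lookup_fib)
  also have "\<dots> = Poly_Mapping.lookup (p * q) k s"
    by (subst lookup_mult_finite[of ?A _ ?B]) auto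
  finally show "Poly_Mapping.lookup (fib s p * fib s q) k = Poly_Mapping.lookup (p * q) k s" .
qed

lemma in_vars_restr: "in_vars n p \<Longrightarrow> in_vars n (restr U p)"
  by (auto simp: in_vars_def restr_def in_keys_iff Poly_Mapping.map.rep_eq when_def)

lemma CX_mult:
  assumes p: "p \<in> CX n U" and q: "q \<in> CX n U"
  shows "p * q \<in> CX n U"
proof -
  have lookup_pq: "Poly_Mapping.lookup (p * q) k = (\<lambda>t. \<Sum>a\<in>Poly_Mapping.keys p. \<Sum>b\<in>Poly_Mapping.keys q.
      if k = a + b then Poly_Mapping.lookup p a t * Poly_Mapping.lookup q b t else 0)" for k
    by (rule ext, subst lookup_mult_finite[OF finite_keys order_refl finite_keys order_refl])
      (auto simp: sum_fun_apply intro!: sum.cong)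
  have "continuous_on U (Poly_Mapping.lookup (p * q) k)" for k
  proof (unfold lookup_pq, intro continuous_on_sum)
    fix a b
    show "continuous_on U (\<lambda>t. if k = a + b then Poly_Mapping.lookup p a t * Poly_Mapping.lookup q b t else 0)"
      using p q by (cases "k = a + b") (simp_all add: CX_def continuous_on_mult)
  qed
  moreover have "Poly_Mapping.lookup (p * q) k s = 0" if "s \<notin> U" for k s
  proof -
    have "Poly_Mapping.lookup p a s = 0" for a
      using p that by (simp add: CX_def)
    then show ?thesis
      unfolding lookup_pq by (intro sum.neutral ballI) simp
  qed
  moreover have "in_vars n (p * q)"
    using p q by (auto simp: CX_def intro: in_vars_mult)
  ultimately show ?thesis
    by (simp add: CX_def)
qed

definition const_on :: "'a set \<Rightarrow> complex mpoly \<Rightarrow> ('a \<Rightarrow> complex) mpoly" where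
  "const_on U q = Poly_Mapping.map (\<lambda>c t. if t \<in> U then c else 0) q"

lemma lookup_const_on:
  "Poly_Mapping.lookup (const_on U q) a = (\<lambda>t. if t \<in> U then Poly_Mapping.lookup q a else 0)"
  by (auto simp: const_on_def Poly_Mapping.map.rep_eq when_def fun_eq_iff)

lemma const_on_CX:
  assumes "in_vars n q"
  shows "const_on U q \<in> CX n U"
proof -
  have "Poly_Mapping.keys (const_on U q) \<subseteq> Poly_Mapping.keys q"
    by (auto simp: in_keys_iff lookup_const_on fun_eq_iff split: if_splits)
  then have "in_vars n (const_on U q)"
    using assms by (auto simp: in_vars_def)
  moreover have "continuous_on U (Poly_Mapping.lookup (const_on U q) a)" for a
    unfolding lookup_const_on by (rule continuous_on_eq[OF continuous_on_const]) auto
  ultimately show ?thesis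
    by (auto simp: CX_def lookup_const_on)
qed

lemma fib_const_on: "s \<in> U \<Longrightarrow> fib s (const_on U q) = q"
  by (rule fib_eqI) (simp add: lookup_const_on)

lemma sum_lessThan_add: "(\<Sum>i<k + l. f i) = (\<Sum>i<k. f i) + (\<Sum>i<l. f (k + i :: nat))"
  by (induction l) (auto simp: add_ac)

lemma ideal_on_zero: "0 \<in> ideal_on n I U"
  unfolding ideal_on_def by (intro CollectI exI[of _ 0]) auto

lemma ideal_on_add:
  assumes "g1 \<in> ideal_on n I U" "g2 \<in> ideal_on n I U"
  shows "g1 + g2 \<in> ideal_on n I U"
proof -
  obtain k1 :: nat and h1 f1 where 1: "\<forall>i<k1. h1 i \<in> CX n U \<and> f1 i \<in> I"
    "g1 = (\<Sum>i<k1. h1 i * restr U (f1 i))"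
    using assms(1) unfolding ideal_on_def by blast
  obtain k2 :: nat and h2 f2 where 2: "\<forall>i<k2. h2 i \<in> CX n U \<and> f2 i \<in> I"
    "g2 = (\<Sum>i<k2. h2 i * restr U (f2 i))"
    using assms(2) unfolding ideal_on_def by blast
  define h where "h i = (if i < k1 then h1 i else h2 (i - k1))" for i
  define f where "f i = (if i < k1 then f1 i else f2 (i - k1))" for i
  have "\<forall>i<k1 + k2. h i \<in> CX n U \<and> f i \<in> I"
    using 1 2 by (auto simp: h_def f_def)
  moreover have "g1 + g2 = (\<Sum>i<k1 + k2. h i * restr U (f i))"
    by (simp add: sum_lessThan_add 1 2 h_def f_def)
  ultimately show ?thesis
    unfolding ideal_on_def by blast
qed

lemma ideal_on_mult:
  assumes "q \<in> CX n U" "g \<in> ideal_on n I U"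
  shows "q * g \<in> ideal_on n I U"
proof -
  obtain k :: nat and h f where g: "\<forall>i<k. h i \<in> CX n U \<and> f i \<in> I"
    "g = (\<Sum>i<k. h i * restr U (f i))"
    using assms(2) unfolding ideal_on_def by blast
  have "\<forall>i<k. q * h i \<in> CX n U \<and> f i \<in> I"
    using g assms(1) by (auto intro: CX_mult)
  moreover have "q * g = (\<Sum>i<k. (q * h i) * restr U (f i))"
    by (simp add: g sum_distrib_left mult.assoc)
  ultimately show ?thesis
    unfolding ideal_on_def by (intro CollectI exI[of _ k] exI[of _ "\<lambda>i. q * h i"] exI[of _ f]) simp
qed

lemma ideal_on_in_vars:
  assumes "is_ideal n I" "g \<in> ideal_on n I U"
  shows "in_vars n g"
proof -
  obtain k :: nat and h f where g: "\<forall>i<k. h i \<in> CX n U \<and> f i \<in> I"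
    "g = (\<Sum>i<k. h i * restr U (f i))"
    using assms(2) unfolding ideal_on_def by blast
  moreover have "in_vars n (f i)" if "f i \<in> I" for i
    using that assms(1) by (auto simp: is_ideal_def CX_def)
  ultimately show ?thesis
    by (auto simp: CX_def intro!: in_vars_sum in_vars_mult in_vars_restr)
qed

text \<open>Closure under polynomial multiples holds because a polynomial with constant coefficients
  lifts to \<open>C[x](U)\<close>.\<close>

lemma poly_ideal_fibre:
  assumes I: "is_ideal n I" and s: "s \<in> U"
  shows "poly_ideal n (fib s ` ideal_on n I U)"
  unfolding poly_ideal_def
proof (intro conjI allI impI ballI)
  show "fib s ` ideal_on n I U \<subseteq> {p. in_vars n p}"
    using ideal_on_in_vars[OF I] by (auto intro: in_vars_fib)
  have "fib s 0 \<in> fib s ` ideal_on n I U"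
    using ideal_on_zero by (rule imageI)
  then show "0 \<in> fib s ` ideal_on n I U"
    by simp
next
  fix a b assume "a \<in> fib s ` ideal_on n I U" "b \<in> fib s ` ideal_on n I U"
  then obtain g h where "g \<in> ideal_on n I U" "h \<in> ideal_on n I U" "a = fib s g" "b = fib s h"
    by blast
  moreover from calculation have "fib s (g + h) \<in> fib s ` ideal_on n I U"
    by (intro imageI ideal_on_add)
  ultimately show "a + b \<in> fib s ` ideal_on n I U"
    by (simp add: fib_add)
next
  fix r a assume r: "in_vars n (r :: complex mpoly)" and "a \<in> fib s ` ideal_on n I U"
  then obtain g where g: "g \<in> ideal_on n I U" "a = fib s g"
    by blast
  then have "fib s (const_on U r * g) \<in> fib s ` ideal_on n I U"
    using ideal_on_mult[OF const_on_CX[OF r]] by blast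
  then show "r * a \<in> fib s ` ideal_on n I U"
    using s g(2) by (simp add: fib_mult fib_const_on)
qed

lemma V_on_iff:
  "(s, x) \<in> V_on n I U \<longleftrightarrow> s \<in> U \<and> x \<in> pts n \<and> (\<forall>p\<in>fib s ` ideal_on n I U. peval p x = 0)"
  by (auto simp: V_on_def)

lemma IV_on_iff:
  "F \<in> IV_on n I U \<longleftrightarrow> F \<in> CX n U \<and> (\<forall>s\<in>U. \<forall>x\<in>pts n.
      (\<forall>p\<in>fib s ` ideal_on n I U. peval p x = 0) \<longrightarrow> peval (fib s F) x = 0)"
  unfolding IV_on_def Ball_def split_paired_All V_on_iff by blast

theorem mainTheorem1:
  fixes I :: "('a::topological_space \<Rightarrow> complex) mpoly set" and n :: nat
  assumes "is_ideal n I"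
  shows "\<forall>U. open U \<longrightarrow> IV_on n I U = FRad_on n I U"
proof (intro allI impI)
  fix U :: "'a set"
  have fibre: "fib s F \<in> crad (fib s ` ideal_on n I U) \<longleftrightarrow>
      (\<forall>x\<in>pts n. (\<forall>p\<in>fib s ` ideal_on n I U. peval p x = 0) \<longrightarrow> peval (fib s F) x = 0)"
    if "F \<in> CX n U" "s \<in> U" for F s
  proof
    show "\<forall>x\<in>pts n. (\<forall>p\<in>fib s ` ideal_on n I U. peval p x = 0) \<longrightarrow> peval (fib s F) x = 0"
      if "fib s F \<in> crad (fib s ` ideal_on n I U)"
      using that crad_vanishes by blast
    have "in_vars n (fib s F)"
      using \<open>F \<in> CX n U\<close> by (simp add: CX_def in_vars_fib)
    then show "fib s F \<in> crad (fib s ` ideal_on n I U)"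
      if "\<forall>x\<in>pts n. (\<forall>p\<in>fib s ` ideal_on n I U. peval p x = 0) \<longrightarrow> peval (fib s F) x = 0"
      using nullstellensatz[OF poly_ideal_fibre[OF assms \<open>s \<in> U\<close>]] that by blast
  qed
  show "IV_on n I U = FRad_on n I U"
    using fibre by (auto simp: IV_on_iff FRad_on_def)
qed

end
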